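(* Let $p$ be an odd prime. For every integer $0<s<p-1$ we have $b_{1,s}(\alpha)=b_{1,p-1-s}(\alpha)$ in $\mathbb F_p[\alpha]$.
   Context: $\mathbb F_p$ is the field of $p$ elements, $\alpha$ an indeterminate, $\binom{x}{m}=x(x-1)\cdots(x-m+1)/m!$. For integers $0<r,s<p$ (interpreted as elements of $\mathbb F_p$), $b_{r,s}(\alpha)=\sum_{k=0}^{p-1}(-r/s)^k\binom{r\alpha-1}{p-1-k}\binom{s\alpha-1}{k}\in\mathbb F_p[\alpha]$. *)

theory Defs
  imports "Berlekamp_Zassenhaus.Finite_Field" "HOL-Computational_Algebra.Polynomial"
begin

text \<open>Binomial polynomial  binom(x, m) = x (x-1) ... (x-m+1) / m!  for a polynomial x
  over a field (used only for m < p, where m! is invertible in F_p).\<close>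
definition poly_binom :: "'a::field poly \<Rightarrow> nat \<Rightarrow> 'a poly" where
  "poly_binom x m = smult (inverse (of_nat (fact m))) (\<Prod>i<m. x - [:of_nat i:])"

text \<open>b_{r,s}(alpha) over F_p, where F_p = 'p mod_ring, p = CARD('p), alpha = [:0,1:].\<close>
definition b_poly :: "nat \<Rightarrow> nat \<Rightarrow> ('p::prime_card) mod_ring poly" where
  "b_poly r s = (\<Sum>k = 0..CARD('p) - 1.
     smult ((- (of_nat r / of_nat s)) ^ k)
       (poly_binom (smult (of_nat r) [:0, 1:] - 1) (CARD('p) - 1 - k)
        * poly_binom (smult (of_nat s) [:0, 1:] - 1) k))"

end

theory Submission
  imports Defs
begin

text \<open>
  Write \<open>B\<^sub>N(t; X, Y) = \<Sum>\<^sub>k t\<^sup>k (N choose k) (X)\<^sub>N\<^sub>-\<^sub>k (Y)\<^sub>k\<close> with rising factorials \<open>(X)\<^sub>m\<close> and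
  \<open>N = p - 1\<close>. Expressing \<open>binom(x, m)\<close> through \<open>(-x)\<^sub>m\<close> gives
  \<open>b\<^sub>r\<^sub>,\<^sub>s = B\<^sub>N(-r/s; 1 - r\<alpha>, 1 - s\<alpha>) / N!\<close>. Since \<open>t\<^sup>N = 1\<close> for \<open>t \<noteq> 0\<close>, \<open>B\<^sub>N\<close> is invariant
  under \<open>(t, X, Y) \<mapsto> (1/t, Y, X)\<close>; expanding \<open>t\<^sup>k = ((t - 1) + 1)\<^sup>k\<close> and using \<open>N = -1\<close> in \<open>\<FF>\<^sub>p\<close>
  gives the reflection \<open>B\<^sub>N(t; X, Y) = B\<^sub>N(1 - t; 2 - X - Y, Y)\<close>. With \<open>c = 1 + s\<close> these carry
  \<open>b\<^sub>1\<^sub>,\<^sub>s\<close> to \<open>B\<^sub>N(c; c\<alpha>, 1 - \<alpha>) / N!\<close> and \<open>b\<^sub>1\<^sub>,\<^sub>p\<^sub>-\<^sub>1\<^sub>-\<^sub>s\<close> to \<open>B\<^sub>N(c; 1 + c\<alpha>, 1 - \<alpha>) / N!\<close>.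
  Finally, Pascal's rule writes \<open>B\<^sub>p(c; c\<alpha>, 1 - \<alpha>)\<close> as \<open>(1 - c) c\<alpha>\<close> times the difference of these
  two sums, while \<open>B\<^sub>p\<close> itself vanishes: in characteristic \<open>p\<close> only its extreme terms survive, and
  \<open>(c\<alpha>)\<^sub>p = c(\<alpha>\<^sup>p - \<alpha>) = -c\<^sup>p (1 - \<alpha>)\<^sub>p\<close>.
\<close>

text \<open>At \<open>t = 1\<close> this is \<open>pochhammer (X + Y) n\<close> by Vandermonde's identity.\<close>

definition vandermonde_sum :: "nat \<Rightarrow> 'a::comm_ring_1 \<Rightarrow> 'a \<Rightarrow> 'a \<Rightarrow> 'a" where
  "vandermonde_sum n t X Y =
     (\<Sum>k\<le>n. t ^ k * of_nat (n choose k) * pochhammer X (n - k) * pochhammer Y k)"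

lemma vandermonde_sum_swap:
  assumes "t * u = 1" and "t ^ n = 1"
  shows "vandermonde_sum n t X Y = vandermonde_sum n u Y X"
  unfolding vandermonde_sum_def
proof (rule sum.reindex_bij_witness[where i="\<lambda>k. n - k" and j="\<lambda>k. n - k"])
  fix k assume k: "k \<in> {..n}"
  have "t ^ k = t ^ k * (t * u) ^ (n - k)" using assms by simp
  also have "\<dots> = t ^ (k + (n - k)) * u ^ (n - k)"
    by (simp add: power_mult_distrib power_add mult.assoc)
  finally have "t ^ k = u ^ (n - k)" using k assms by simp
  then show "u ^ (n - k) * of_nat (n choose (n - k)) * pochhammer Y (n - (n - k)) * pochhammer X (n - k)
      = t ^ k * of_nat (n choose k) * pochhammer X (n - k) * pochhammer Y k"
    using k by (simp add: binomial_symmetric[symmetric] mult_ac)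
qed auto

lemma sum_triangle_swap:
  fixes n :: nat
  shows "(\<Sum>k\<le>n. \<Sum>j\<le>k. f j (k - j)) = (\<Sum>j\<le>n. \<Sum>i\<le>n - j. f j i)"
proof -
  have "(\<Sum>k\<le>n. \<Sum>j\<le>k. f j (k - j)) = (\<Sum>(j, i)\<in>{(j, i). j + i \<le> n}. f j i)"
    by (rule sum.triangle_reindex_eq[symmetric])
  also have "{(j, i). j + i \<le> n} = Sigma {..n} (\<lambda>j. {..n - j})"
    by auto
  finally show ?thesis
    by (simp add: sum.Sigma)
qed

lemma vandermonde_sum_shift:
  "vandermonde_sum n t X Y =
     (\<Sum>j\<le>n. (t - 1) ^ j * of_nat (n choose j) * pochhammer Y j * pochhammer (X + Y + of_nat j) (n - j))"
proof -
  define h where "h j i = (t - 1) ^ j * of_nat ((j + i) choose j) * of_nat (n choose (j + i))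
      * pochhammer X (n - (j + i)) * pochhammer Y (j + i)" for j i
  have "vandermonde_sum n t X Y = (\<Sum>k\<le>n. \<Sum>j\<le>k. h j (k - j))"
    unfolding vandermonde_sum_def
  proof (rule sum.cong[OF refl])
    fix k
    have "t ^ k = (\<Sum>j\<le>k. of_nat (k choose j) * (t - 1) ^ j)"
      using binomial_ring[of "t - 1" 1 k] by simp
    then show "t ^ k * of_nat (n choose k) * pochhammer X (n - k) * pochhammer Y k = (\<Sum>j\<le>k. h j (k - j))"
      by (simp add: h_def sum_distrib_left sum_distrib_right mult_ac)
  qed
  also have "\<dots> = (\<Sum>j\<le>n. \<Sum>i\<le>n - j. h j i)"
    by (rule sum_triangle_swap)
  also have "\<dots> = (\<Sum>j\<le>n. (t - 1) ^ j * of_nat (n choose j) * pochhammer Y j * pochhammer (X + Y + of_nat j) (n - j))"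
  proof (rule sum.cong[OF refl])
    fix j assume j: "j \<in> {..n}"
    have "h j i = (t - 1) ^ j * of_nat (n choose j) * pochhammer Y j
        * (of_nat ((n - j) choose i) * pochhammer (Y + of_nat j) i * pochhammer X (n - j - i))"
      if "i \<le> n - j" for i
    proof -
      have "(n choose (j + i)) * ((j + i) choose j) = (n choose j) * ((n - j) choose i)"
        using choose_mult[of j "j + i" n] that j by auto
      then have "(of_nat (n choose (j + i)) :: 'a) * of_nat ((j + i) choose j)
          = of_nat (n choose j) * of_nat ((n - j) choose i)"
        by (metis of_nat_mult)
      then show ?thesis
        unfolding h_def pochhammer_product' using that
        by (simp add: algebra_simps)
    qed
    then show "(\<Sum>i\<le>n - j. h j i) = (t - 1) ^ j * of_nat (n choose j) * pochhammer Y j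
        * pochhammer (X + Y + of_nat j) (n - j)"
      using pochhammer_binomial_sum[of "Y + of_nat j" X "n - j"]
      by (simp add: sum_distrib_left ac_simps)
  qed
  finally show ?thesis .
qed

lemma of_nat_diff_eq_minus_Suc:
  assumes "of_nat (Suc n) = (0::'a::comm_ring_1)" and "j \<le> n"
  shows "(of_nat (n - j) :: 'a) = - 1 - of_nat j"
proof -
  have "(of_nat (n - j) :: 'a) + of_nat j + 1 = of_nat (Suc n)"
    using assms(2) by (simp flip: of_nat_add)
  with assms(1) show ?thesis
    by (simp add: algebra_simps eq_neg_iff_add_eq_0)
qed

lemma vandermonde_sum_reflect:
  fixes X Y t :: "'a::comm_ring_1"
  assumes char: "of_nat (Suc n) = (0::'a)" and sign: "(- 1 :: 'a) ^ n = 1"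
  shows "vandermonde_sum n t X Y = vandermonde_sum n (1 - t) (2 - X - Y) Y"
proof -
  have "(t - 1) ^ j * pochhammer (X + Y + of_nat j) (n - j) = (1 - t) ^ j * pochhammer (2 - X - Y) (n - j)"
    if "j \<le> n" for j
  proof -
    have "X + Y + of_nat j = (X + Y - 2) - of_nat (n - j) + 1"
      using of_nat_diff_eq_minus_Suc[OF char that] by (simp add: algebra_simps)
    then have "pochhammer (X + Y + of_nat j) (n - j) = (- 1) ^ (n - j) * pochhammer (- (X + Y - 2)) (n - j)"
      by (simp only: pochhammer_minus')
    then have "pochhammer (X + Y + of_nat j) (n - j) = (- 1) ^ (n - j) * pochhammer (2 - X - Y) (n - j)"
      by (simp add: algebra_simps)
    moreover have "(t - 1) ^ j = (- 1) ^ j * (1 - t) ^ j"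
      by (simp flip: power_mult_distrib)
    ultimately have "(t - 1) ^ j * pochhammer (X + Y + of_nat j) (n - j)
        = ((- 1) ^ j * (- 1) ^ (n - j)) * ((1 - t) ^ j * pochhammer (2 - X - Y) (n - j))"
      by (simp only: mult_ac)
    also have "(- 1 :: 'a) ^ j * (- 1) ^ (n - j) = 1"
      using sign that by (simp flip: power_add)
    finally show ?thesis by simp
  qed
  then show ?thesis
    unfolding vandermonde_sum_shift[of n t X Y] unfolding vandermonde_sum_def
    by (intro sum.cong refl) (simp add: ac_simps)
qed

lemma sum_choose_Suc_pascal:
  fixes f :: "nat \<Rightarrow> 'a::comm_semiring_1"
  shows "(\<Sum>j\<le>Suc m. of_nat (Suc m choose j) * f j) = (\<Sum>j\<le>m. of_nat (m choose j) * (f j + f (Suc j)))"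
proof -
  have "(\<Sum>j\<le>m. of_nat (m choose j) * f j) = (\<Sum>j\<le>Suc m. of_nat (m choose j) * f j)"
    by (simp add: binomial_eq_0)
  also have "\<dots> = f 0 + (\<Sum>j\<le>m. of_nat (m choose Suc j) * f (Suc j))"
    by (subst sum.atMost_Suc_shift) simp
  finally have shifted: "(\<Sum>j\<le>m. of_nat (m choose j) * f j) = \<dots>" .
  show ?thesis
    by (simp only: sum.atMost_Suc_shift binomial_Suc_Suc shifted sum.distrib distrib_left distrib_right)
       (simp add: sum.distrib algebra_simps)
qed

lemma vandermonde_sum_Suc:
  "vandermonde_sum (Suc m) t X Y =
     (\<Sum>k\<le>m. t ^ k * of_nat (m choose k) * pochhammer X (m - k) * pochhammer Y k
        * (X + of_nat (m - k) + t * (Y + of_nat k)))"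
proof -
  have "vandermonde_sum (Suc m) t X Y
      = (\<Sum>k\<le>Suc m. of_nat (Suc m choose k) * (t ^ k * pochhammer X (Suc m - k) * pochhammer Y k))"
    unfolding vandermonde_sum_def by (simp add: ac_simps)
  also have "\<dots> = (\<Sum>k\<le>m. of_nat (m choose k) * (t ^ k * pochhammer X (Suc m - k) * pochhammer Y k
      + t ^ Suc k * pochhammer X (m - k) * pochhammer Y (Suc k)))"
    using sum_choose_Suc_pascal[of m "\<lambda>k. t ^ k * pochhammer X (Suc m - k) * pochhammer Y k"] by simp
  also have "\<dots> = (\<Sum>k\<le>m. t ^ k * of_nat (m choose k) * pochhammer X (m - k) * pochhammer Y k
        * (X + of_nat (m - k) + t * (Y + of_nat k)))"
    by (intro sum.cong refl) (simp add: Suc_diff_le pochhammer_Suc algebra_simps)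
  finally show ?thesis .
qed

lemma vandermonde_sum_add_one:
  "X * (vandermonde_sum n t (1 + X) Y - vandermonde_sum n t X Y)
     = (\<Sum>k\<le>n. t ^ k * of_nat (n choose k) * pochhammer X (n - k) * pochhammer Y k * of_nat (n - k))"
  unfolding vandermonde_sum_def sum_subtractf[symmetric] sum_distrib_left
proof (intro sum.cong refl)
  fix k
  have "X * pochhammer (1 + X) (n - k) = pochhammer X (n - k) * (X + of_nat (n - k))"
    by (metis pochhammer_rec pochhammer_Suc add.commute)
  then have step: "X * pochhammer (1 + X) (n - k) - X * pochhammer X (n - k) = pochhammer X (n - k) * of_nat (n - k)"
    by (simp add: algebra_simps)
  have "X * (t ^ k * of_nat (n choose k) * pochhammer (1 + X) (n - k) * pochhammer Y k
      - t ^ k * of_nat (n choose k) * pochhammer X (n - k) * pochhammer Y k)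
    = t ^ k * of_nat (n choose k) * pochhammer Y k * (X * pochhammer (1 + X) (n - k) - X * pochhammer X (n - k))"
    by (simp add: algebra_simps)
  then show "X * (t ^ k * of_nat (n choose k) * pochhammer (1 + X) (n - k) * pochhammer Y k
      - t ^ k * of_nat (n choose k) * pochhammer X (n - k) * pochhammer Y k)
    = t ^ k * of_nat (n choose k) * pochhammer X (n - k) * pochhammer Y k * of_nat (n - k)"
    unfolding step by (simp add: ac_simps)
qed

lemma vandermonde_sum_prime_char:
  fixes X Y t :: "'a::comm_ring_1"
  assumes p: "prime p" and char: "of_nat p = (0::'a)"
  shows "vandermonde_sum p t X Y = pochhammer X p + t ^ p * pochhammer Y p"
proof -
  let ?f = "\<lambda>k. t ^ k * of_nat (p choose k) * pochhammer X (p - k) * pochhammer Y k"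
  have "of_nat (p choose k) = (0::'a)" if "0 < k" "k < p" for k
  proof -
    have "p dvd (p choose k)"
      using dvd_choose_prime[of k p] that p by simp
    then obtain q where "p choose k = p * q" ..
    with char show ?thesis by simp
  qed
  then have "sum ?f {..p} = sum ?f {0, p}"
    by (intro sum.mono_neutral_right) auto
  with p show ?thesis
    unfolding vandermonde_sum_def by (simp add: prime_gt_0_nat)
qed

lemma smult_sum_right: "smult a (sum f A) = (\<Sum>x\<in>A. smult a (f x))"
  by (induct A rule: infinite_finite_induct) (simp_all add: smult_add_right)

lemma minus_one_power_poly: "((- 1) ^ n :: 'a::comm_ring_1 poly) = [:(- 1) ^ n:]"
proof -
  have "(- 1 :: 'a poly) = [:- 1:]"
    by (simp add: one_pCons)
  then show ?thesis
    by (simp only: poly_const_pow)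
qed

lemma power_card_mod_ring: "(x :: 'p::prime_card mod_ring) ^ CARD('p) = x"
  using finite_field_power_card_eq_same[of x] by simp

lemma power_card_minus_one_mod_ring:
  assumes "(x :: 'p::prime_card mod_ring) \<noteq> 0"
  shows "x ^ (CARD('p) - 1) = 1"
proof -
  have "CARD('p) = Suc (CARD('p) - 1)"
    by simp
  then have "x * x ^ (CARD('p) - 1) = x * 1"
    by (metis power_Suc power_card_mod_ring mult_1_right)
  with assms show ?thesis by simp
qed

lemma bij_betw_of_nat_mod_ring:
  "bij_betw (of_nat :: nat \<Rightarrow> 'p::prime_card mod_ring) {..<CARD('p)} UNIV"
proof -
  have image: "of_nat ` {..<CARD('p)} = (UNIV :: 'p mod_ring set)"
    using surj_of_nat_mod_ring by fastforce
  then have "card (of_nat ` {..<CARD('p)} :: 'p mod_ring set) = card {..<CARD('p)}"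
    by simp
  then show ?thesis
    using image by (simp add: bij_betw_def eq_card_imp_inj_on)
qed

lemma pochhammer_card_mod_ring:
  fixes z :: "'p::prime_card mod_ring poly"
  shows "pochhammer z CARD('p) = (\<Prod>a\<in>UNIV. z + [:a:])"
proof -
  have "pochhammer z CARD('p) = (\<Prod>i<CARD('p). z + [:of_nat i:])"
    by (simp add: pochhammer_prod of_nat_poly atLeast0LessThan)
  also have "\<dots> = (\<Prod>a\<in>UNIV. z + [:a:])"
    using prod.reindex_bij_betw[OF bij_betw_of_nat_mod_ring, of "\<lambda>a. z + [:a:]"] by simp
  finally show ?thesis .
qed

lemma pochhammer_card_affine:
  fixes x :: "'p::prime_card mod_ring poly"
  assumes "c \<noteq> 0"
  shows "pochhammer (smult c x + [:d:]) CARD('p) = smult c (\<Prod>a\<in>UNIV. x + [:a:])"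
proof -
  have "pochhammer (smult c x + [:d:]) CARD('p) = (\<Prod>a\<in>UNIV. smult c (x + [:(d + a) / c:]))"
    unfolding pochhammer_card_mod_ring using assms
    by (intro prod.cong refl) (simp add: smult_add_right add.assoc)
  also have "\<dots> = smult (c ^ CARD('p)) (\<Prod>a\<in>UNIV. x + [:(d + a) / c:])"
    by (simp add: prod_smult)
  also have "(\<Prod>a\<in>UNIV. x + [:(d + a) / c:]) = (\<Prod>a\<in>UNIV. x + [:a:])"
    by (rule prod.reindex_bij_witness[where i="\<lambda>a. c * a - d" and j="\<lambda>a. (d + a) / c"])
       (use assms in auto)
  finally show ?thesis by (simp add: power_card_mod_ring)
qed

lemma vandermonde_sum_card_eq_0:
  fixes c :: "'p::prime_card mod_ring"
  assumes "c \<noteq> 0"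
  shows "vandermonde_sum CARD('p) [:c:] (smult c [:0, 1:]) (1 - [:0, 1:]) = 0"
proof -
  define Q where "Q = (\<Prod>a\<in>UNIV. [:0, 1:] + [:a :: 'p mod_ring:])"
  have char: "of_nat CARD('p) = (0 :: 'p mod_ring poly)"
    by (simp add: of_nat_poly)
  have "1 - [:0, 1:] = smult (- 1) [:0, 1:] + [:1 :: 'p mod_ring:]"
    by (simp add: one_pCons)
  then have "pochhammer (1 - [:0, 1:]) CARD('p) = smult (- 1) Q"
    using pochhammer_card_affine[of "- 1 :: 'p mod_ring" "[:0, 1:]" 1] unfolding Q_def by simp
  moreover have "pochhammer (smult c [:0, 1:]) CARD('p) = smult c Q"
    using pochhammer_card_affine[OF assms, of "[:0, 1:]" 0] unfolding Q_def by simp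
  moreover have "[:c:] ^ CARD('p) = [:c:]"
    by (simp add: poly_const_pow power_card_mod_ring)
  ultimately show ?thesis
    unfolding vandermonde_sum_prime_char[OF prime_card char] by simp
qed

lemma vandermonde_sum_translate:
  fixes c :: "'p::prime_card mod_ring"
  assumes c0: "c \<noteq> 0" and c1: "c \<noteq> 1"
  shows "vandermonde_sum (CARD('p) - 1) [:c:] (1 + smult c [:0, 1:]) (1 - [:0, 1:])
       = vandermonde_sum (CARD('p) - 1) [:c:] (smult c [:0, 1:]) (1 - [:0, 1:])"
proof -
  define N where "N = CARD('p) - 1"
  have card: "CARD('p) = Suc N"
    unfolding N_def by simp
  have char: "of_nat (Suc N) = (0 :: 'p mod_ring poly)"
    unfolding card[symmetric] by (simp add: of_nat_poly)
  define t V U where "t = [:c:]" and "V = smult c [:0, 1:]" and "U = 1 - [:0, 1 :: 'p mod_ring:]"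
  define \<tau> where "\<tau> k = t ^ k * of_nat (N choose k) * pochhammer V (N - k) * pochhammer U k" for k
  have "vandermonde_sum (Suc N) t V U = (1 - t) * (\<Sum>k\<le>N. \<tau> k * of_nat (N - k))"
    unfolding vandermonde_sum_Suc sum_distrib_left
  proof (intro sum.cong refl)
    fix k assume "k \<in> {..N}"
    then have k: "of_nat k = - 1 - (of_nat (N - k) :: 'p mod_ring poly)"
      using of_nat_diff_eq_minus_Suc[OF char, of k] by simp
    have "V + t * U = t"
      unfolding V_def t_def U_def by (simp add: algebra_simps)
    then have "V + of_nat (N - k) + t * (U + of_nat k) = (1 - t) * of_nat (N - k)"
      unfolding k by (simp add: algebra_simps)
    then show "t ^ k * of_nat (N choose k) * pochhammer V (N - k) * pochhammer U k
        * (V + of_nat (N - k) + t * (U + of_nat k)) = (1 - t) * (\<tau> k * of_nat (N - k))"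
      unfolding \<tau>_def by (simp add: ac_simps)
  qed
  also have "(\<Sum>k\<le>N. \<tau> k * of_nat (N - k)) = V * (vandermonde_sum N t (1 + V) U - vandermonde_sum N t V U)"
    unfolding \<tau>_def by (rule vandermonde_sum_add_one[symmetric])
  finally have "(1 - t) * V * (vandermonde_sum N t (1 + V) U - vandermonde_sum N t V U) = 0"
    using vandermonde_sum_card_eq_0[OF c0] unfolding card t_def V_def U_def by (simp add: mult.assoc)
  moreover have "1 - t \<noteq> 0" and "V \<noteq> 0"
    using c0 c1 unfolding t_def V_def by (auto simp: one_pCons)
  ultimately show ?thesis
    unfolding N_def t_def V_def U_def by simp
qed

lemma vandermonde_sum_swap_mod_ring:
  fixes x :: "'p::prime_card mod_ring"
  assumes "x \<noteq> 0"
  shows "vandermonde_sum (CARD('p) - 1) [:x:] X Y = vandermonde_sum (CARD('p) - 1) [:inverse x:] Y X"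
proof (rule vandermonde_sum_swap)
  show "[:x:] * [:inverse x:] = 1"
    using assms by (simp add: one_pCons)
  show "[:x:] ^ (CARD('p) - 1) = 1"
    using power_card_minus_one_mod_ring[OF assms] by (simp add: poly_const_pow one_pCons)
qed

lemma vandermonde_sum_reflect_mod_ring:
  fixes t X Y :: "'p::prime_card mod_ring poly"
  shows "vandermonde_sum (CARD('p) - 1) t X Y = vandermonde_sum (CARD('p) - 1) (1 - t) (2 - X - Y) Y"
proof (rule vandermonde_sum_reflect)
  show "of_nat (Suc (CARD('p) - 1)) = (0 :: 'p mod_ring poly)"
    by (simp add: of_nat_poly)
  have "(- 1 :: 'p mod_ring) ^ (CARD('p) - 1) = 1"
    by (rule power_card_minus_one_mod_ring) simp
  then show "(- 1 :: 'p mod_ring poly) ^ (CARD('p) - 1) = 1"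
    by (simp add: minus_one_power_poly poly_const_pow one_pCons)
qed

lemma poly_binom_eq_pochhammer:
  "poly_binom x m = smult (inverse (of_nat (fact m)) * (- 1) ^ m) (pochhammer (- x) m)"
proof -
  have "pochhammer (- x) m = (\<Prod>i<m. - (x - [:of_nat i:]))"
    by (simp add: pochhammer_prod atLeast0LessThan of_nat_poly)
  also have "\<dots> = (- 1) ^ m * (\<Prod>i<m. x - [:of_nat i:])"
    by (simp only: prod_uminus card_lessThan)
  finally have "(\<Prod>i<m. x - [:of_nat i:]) = (- 1) ^ m * pochhammer (- x) m"
    by (simp add: algebra_simps)
  then show ?thesis
    unfolding poly_binom_def by (simp add: minus_one_power_poly)
qed

lemma inverse_fact_mult_inverse_fact:
  assumes "k \<le> n" and "of_nat (fact n) \<noteq> (0 :: 'a::field)"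
  shows "inverse (of_nat (fact (n - k)) :: 'a) * inverse (of_nat (fact k))
       = inverse (of_nat (fact n)) * of_nat (n choose k)"
proof -
  have fact: "(of_nat (fact n) :: 'a) = of_nat (fact k) * of_nat (fact (n - k)) * of_nat (n choose k)"
    using binomial_fact_lemma[OF assms(1)] by (metis of_nat_mult)
  with assms(2) show ?thesis
    by (simp add: field_simps)
qed

lemma b_poly_eq_vandermonde_sum:
  "(b_poly r s :: 'p::prime_card mod_ring poly) = smult (inverse (of_nat (fact (CARD('p) - 1))))
     (vandermonde_sum (CARD('p) - 1) [:- (of_nat r / of_nat s):]
        (1 - smult (of_nat r) [:0, 1:]) (1 - smult (of_nat s) [:0, 1:]))"
proof -
  define N where "N = CARD('p) - 1"
  define t :: "'p mod_ring" where "t = - (of_nat r / of_nat s)"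
  have "\<not> CARD('p) \<le> N"
    unfolding N_def using prime_gt_0_nat[OF prime_card[where 'a='p]] by linarith
  then have fact_N: "of_nat (fact N) \<noteq> (0 :: 'p mod_ring)"
    by (simp add: of_nat_eq_0_iff_char_dvd prime_dvd_fact_iff[OF prime_card])
  have "(- 1 :: 'p mod_ring) ^ N = 1"
    unfolding N_def by (rule power_card_minus_one_mod_ring) simp
  then have sign: "(- 1 :: 'p mod_ring) ^ (N - k) * (- 1) ^ k = 1" if "k \<le> N" for k
    using that by (simp flip: power_add)
  have "smult (t ^ k) (poly_binom (smult (of_nat r) [:0, 1:] - 1) (N - k) * poly_binom (smult (of_nat s) [:0, 1:] - 1) k)
      = smult (inverse (of_nat (fact N))) ([:t:] ^ k * of_nat (N choose k)
          * pochhammer (1 - smult (of_nat r) [:0, 1:]) (N - k) * pochhammer (1 - smult (of_nat s) [:0, 1:]) k)"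
    if "k \<le> N" for k
    using sign[OF that] inverse_fact_mult_inverse_fact[OF that fact_N]
    by (simp add: poly_binom_eq_pochhammer poly_const_pow of_nat_poly mult_ac)
  then show ?thesis
    unfolding b_poly_def vandermonde_sum_def smult_sum_right N_def[symmetric] t_def[symmetric]
    by (intro sum.cong) (auto simp: atLeast0AtMost)
qed

lemma b_poly_one_via_reflection:
  assumes "(of_nat s :: 'p::prime_card mod_ring) \<noteq> 0"
  shows "(b_poly 1 s :: 'p mod_ring poly) = smult (inverse (of_nat (fact (CARD('p) - 1))))
     (vandermonde_sum (CARD('p) - 1) [:1 + of_nat s:] (smult (1 + of_nat s) [:0, 1:]) (1 - [:0, 1:]))"
proof -
  let ?N = "CARD('p) - 1"
  let ?\<alpha> = "[:0, 1 :: 'p mod_ring:]"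
  have "b_poly 1 s = smult (inverse (of_nat (fact ?N)))
      (vandermonde_sum ?N [:- (1 / of_nat s):] (1 - ?\<alpha>) (1 - smult (of_nat s) ?\<alpha>))"
    by (simp add: b_poly_eq_vandermonde_sum)
  also have "\<dots> = smult (inverse (of_nat (fact ?N)))
      (vandermonde_sum ?N [:- of_nat s:] (1 - smult (of_nat s) ?\<alpha>) (1 - ?\<alpha>))"
    using vandermonde_sum_swap_mod_ring[of "- (1 / of_nat s) :: 'p mod_ring"] assms by simp
  also have "vandermonde_sum ?N [:- of_nat s:] (1 - smult (of_nat s) ?\<alpha>) (1 - ?\<alpha>)
      = vandermonde_sum ?N [:1 + of_nat s:] (smult (1 + of_nat s) ?\<alpha>) (1 - ?\<alpha>)"
  proof -
    have "1 - [:- of_nat s:] = [:1 + of_nat s :: 'p mod_ring:]"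
      by (simp add: one_pCons)
    moreover have "2 - (1 - smult (of_nat s) ?\<alpha>) - (1 - ?\<alpha>) = smult (1 + of_nat s) ?\<alpha>"
      by (simp add: smult_add_left algebra_simps)
    ultimately show ?thesis
      using vandermonde_sum_reflect_mod_ring[of "[:- of_nat s:]" "1 - smult (of_nat s) ?\<alpha>" "1 - ?\<alpha>"]
      by (simp add: ac_simps)
  qed
  finally show ?thesis .
qed

lemma b_poly_one_via_swap:
  fixes c :: "'p::prime_card mod_ring"
  assumes "c \<noteq> 0" and "of_nat s = - c"
  shows "(b_poly 1 s :: 'p mod_ring poly) = smult (inverse (of_nat (fact (CARD('p) - 1))))
     (vandermonde_sum (CARD('p) - 1) [:c:] (1 + smult c [:0, 1:]) (1 - [:0, 1:]))"
proof -
  have minus_c: "1 - smult (- c) [:0, 1:] = 1 + smult c [:0, 1:]"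
    by (simp only: smult_minus_left diff_minus_eq_add)
  show ?thesis
    using vandermonde_sum_swap_mod_ring[OF assms(1), of "1 + smult c [:0, 1:]" "1 - [:0, 1:]"]
    unfolding b_poly_eq_vandermonde_sum assms(2) minus_c by (simp add: divide_inverse)
qed

theorem corollary14:
  fixes s :: nat
  assumes "odd (CARD('p::prime_card))"
    and "0 < s" and "s < CARD('p) - 1"
  shows "(b_poly 1 s :: 'p mod_ring poly) = b_poly 1 (CARD('p) - 1 - s)"
proof -
  define c :: "'p mod_ring" where "c = 1 + of_nat s"
  have s0: "(of_nat s :: 'p mod_ring) \<noteq> 0" and c0: "c \<noteq> 0"
    using assms(2,3) unfolding c_def of_nat_Suc[symmetric] of_nat_eq_0_iff_char_dvd semiring_char_mod_ring
    by (auto dest: dvd_imp_le)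
  have c1: "c \<noteq> 1"
    using s0 unfolding c_def by simp
  have "(of_nat (CARD('p) - 1 - s) :: 'p mod_ring) + c = of_nat CARD('p)"
    using assms(3) unfolding c_def by (simp flip: of_nat_Suc of_nat_add)
  then have s': "(of_nat (CARD('p) - 1 - s) :: 'p mod_ring) = - c"
    by (simp add: eq_neg_iff_add_eq_0)
  have "b_poly 1 s = smult (inverse (of_nat (fact (CARD('p) - 1))))
      (vandermonde_sum (CARD('p) - 1) [:c:] (smult c [:0, 1:]) (1 - [:0, 1:]))"
    unfolding c_def by (rule b_poly_one_via_reflection[OF s0])
  also have "\<dots> = smult (inverse (of_nat (fact (CARD('p) - 1))))
      (vandermonde_sum (CARD('p) - 1) [:c:] (1 + smult c [:0, 1:]) (1 - [:0, 1:]))"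
    by (simp only: vandermonde_sum_translate[OF c0 c1])
  also have "\<dots> = b_poly 1 (CARD('p) - 1 - s)"
    by (rule b_poly_one_via_swap[OF c0 s', symmetric])
  finally show ?thesis .
qed

end
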